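(* Let $N\ge2$, $R\in[0,1]$, $\alpha>0$, and set $K^*(N,p)=|\mathbb S^{N-1}|^{\frac{1-p}{p+1}}\left(\frac{2(p+1)}{p-1}\right)^{\frac{2p}{p+1}}$. Then $$\int_{\partial B}|Du_{\alpha,\mathrm{rad}}|^2d\sigma\le K^*(N,p)\frac{(C_{\alpha,\mathrm{rad}})^{2p/(p+1)}}{(\alpha+1)^{2/(p+1)}}.$$
   Context: $B=B(0,1)\subset\mathbb R^N$, $|\mathbb S^{N-1}|=2\pi^{N/2}/\Gamma(N/2)$; $p\in(1,\frac{N+2}{N-2})$ if $N\ge3$, $p>1$ if $N=2$. Weight $V=V_{R,\alpha}$: for $R\in(0,1)$, $V(r)=(1-r/R)^\alpha$ for $0\le r<R$, $\left(1-\frac{1-r}{1-R}\right)^\alpha$ for $R\le r\le1$; $V=|x|^\alpha$ if $R=0$; $V=(1-|x|)^\alpha$ if $R=1$. $S_{\alpha,\mathrm{rad}}=\inf_{0\ne u\in H^1_{0,\mathrm{rad}}(B)}\frac{\int_B|Du|^2}{(\int_BV|u|^{p+1})^{2/(p+1)}}$; $u^*_{\alpha,\mathrm{rad}}$ is a positive radial minimiser with $\int_BV|u^*_{\alpha,\mathrm{rad}}|^{p+1}=1$, and $u_{\alpha,\mathrm{rad}}=S_{\alpha,\mathrm{rad}}^{1/(p-1)}u^*_{\alpha,\mathrm{rad}}$, which solves $-\Delta u=V(|x|)u^p$ in $B$, $u=0$ on $\partial B$. $C_{\alpha,\mathrm{rad}}=I(u_{\alpha,\mathrm{rad}})$ where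 $I(u)=\frac12\int_B|Du|^2-\frac1{p+1}\int_BV|u|^{p+1}$. *)

theory Defs
  imports "HOL-Analysis.Analysis"
begin

text \<open>Radial functions on the unit ball B of R^N are represented by their
profiles v on (0,1], u(x) = v(|x|). Integrals over B of radial quantities are
written in polar coordinates: int_B f(|x|) dx = |S^{N-1}| int_0^1 f(r) r^(N-1) dr.\<close>

definition sphere_area :: "nat \<Rightarrow> real" where
  "sphere_area N = 2 * pi powr (real N / 2) / Gamma (real N / 2)"

definition Vw :: "real \<Rightarrow> real \<Rightarrow> real \<Rightarrow> real" where
  "Vw R \<alpha> r =
     (if R = 0 then r powr \<alpha>
      else if R = 1 then (1 - r) powr \<alpha>
      else if r < R then (1 - r / R) powr \<alpha>
      else (1 - (1 - r) / (1 - R)) powr \<alpha>)"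

definition rderiv :: "(real \<Rightarrow> real) \<Rightarrow> real \<Rightarrow> real" where
  "rderiv v r = vector_derivative v (at r within {0<..1})"

text \<open>Profiles of radial functions in H^1_0(B) that are C^1 on B minus the origin
(this class contains every radial minimiser and gives the same infimum).\<close>
definition rad_adm :: "nat \<Rightarrow> real \<Rightarrow> real \<Rightarrow> real \<Rightarrow> (real \<Rightarrow> real) \<Rightarrow> bool" where
  "rad_adm N R \<alpha> p v \<longleftrightarrow>
     (\<forall>r\<in>{0<..1}. v differentiable (at r within {0<..1})) \<and>
     continuous_on {0<..1} (rderiv v) \<and>
     v 1 = 0 \<and>
     set_integrable lborel {0<..<1} (\<lambda>r. (rderiv v r)\<^sup>2 * r ^ (N - 1)) \<and>
     set_integrable lborel {0<..<1} (\<lambda>r. Vw R \<alpha> r * \<bar>v r\<bar> powr (p + 1) * r ^ (N - 1))"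

definition dirichlet :: "nat \<Rightarrow> (real \<Rightarrow> real) \<Rightarrow> real" where
  "dirichlet N v = sphere_area N * (LINT r : {0<..<1} | lborel. (rderiv v r)\<^sup>2 * r ^ (N - 1))"

definition wnorm :: "nat \<Rightarrow> real \<Rightarrow> real \<Rightarrow> real \<Rightarrow> (real \<Rightarrow> real) \<Rightarrow> real" where
  "wnorm N R \<alpha> p v = sphere_area N *
     (LINT r : {0<..<1} | lborel. Vw R \<alpha> r * \<bar>v r\<bar> powr (p + 1) * r ^ (N - 1))"

definition S_rad :: "nat \<Rightarrow> real \<Rightarrow> real \<Rightarrow> real \<Rightarrow> real" where
  "S_rad N R \<alpha> p = (INF v \<in> {v. rad_adm N R \<alpha> p v \<and> (\<exists>r\<in>{0<..<1}. v r \<noteq> 0)}.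
      dirichlet N v / (wnorm N R \<alpha> p v) powr (2 / (p + 1)))"

definition energy :: "nat \<Rightarrow> real \<Rightarrow> real \<Rightarrow> real \<Rightarrow> (real \<Rightarrow> real) \<Rightarrow> real" where
  "energy N R \<alpha> p v = dirichlet N v / 2 - wnorm N R \<alpha> p v / (p + 1)"

definition Kstar :: "nat \<Rightarrow> real \<Rightarrow> real" where
  "Kstar N p = sphere_area N powr ((1 - p) / (p + 1)) *
     (2 * (p + 1) / (p - 1)) powr (2 * p / (p + 1))"

end

theory Submission
  imports Defs
begin

text \<open>
  Let \<sigma> = |S^(N-1)| and S = S_rad. Differentiating the Rayleigh quotient along u* + t \<phi> shows
  that the minimiser solves the weak Euler--Lagrange equation
  \<integral> u*' \<phi>' r^(N-1) = S \<integral> V u*^p \<phi> r^(N-1). Testing it with cutoffs \<phi> that fall from 1 to 0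
  in shrinking neighbourhoods of r = 1 gives |u*'(1)| \<le> S \<integral> V u*^p r^(N-1). Young's inequality,
  together with \<integral> V u*^(p+1) r^(N-1) = 1/\<sigma> and \<integral> V r^(N-1) \<le> \<integral>_0^1 V = 1/(\<alpha>+1), bounds this
  integral by \<sigma>^(-p/(p+1)) (\<alpha>+1)^(-1/(p+1)). The rescaled solution u = S^(1/(p-1)) u* has energy
  C = (p-1)/(2(p+1)) S^((p+1)/(p-1)), and expressing S through C turns the bound into the claim.
\<close>

lemma powr_tangent_le:
  fixes x y p :: real
  assumes "x > 0" "p > 0"
  shows "x powr (p + 1) + (p + 1) * x powr p * (y - x) \<le> \<bar>y\<bar> powr (p + 1)"
proof -
  have "x powr p * \<bar>y\<bar> \<le> (x powr p) powr ((p + 1) / p) / ((p + 1) / p) + \<bar>y\<bar> powr (p + 1) / (p + 1)"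
    by (rule Youngs_inequality) (use assms in \<open>auto simp: field_simps\<close>)
  also have "(x powr p) powr ((p + 1) / p) = x powr (p + 1)"
    using assms by (simp add: powr_powr)
  also have "x powr (p + 1) / ((p + 1) / p) + \<bar>y\<bar> powr (p + 1) / (p + 1)
      = (p * x powr (p + 1) + \<bar>y\<bar> powr (p + 1)) / (p + 1)"
    using assms by (simp add: divide_simps)
  finally have "(p + 1) * (x powr p * \<bar>y\<bar>) \<le> p * x powr (p + 1) + \<bar>y\<bar> powr (p + 1)"
    using assms by (simp add: pos_le_divide_eq mult.commute)
  moreover have "(p + 1) * (x powr p * y) \<le> (p + 1) * (x powr p * \<bar>y\<bar>)"
    using assms by (intro mult_left_mono) auto
  moreover have "x powr (p + 1) + (p + 1) * x powr p * (y - x) = (p + 1) * (x powr p * y) - p * x powr (p + 1)"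
    using assms by (simp add: powr_add algebra_simps)
  ultimately show ?thesis
    by linarith
qed

lemma powr_le_Young:
  fixes x p l :: real
  assumes "x \<ge> 0" "p > 0" "l > 0"
  shows "x powr p \<le> p / (p + 1) * l * x powr (p + 1) + l powr (- p) / (p + 1)"
proof -
  have "x powr p = (l powr (p / (p + 1)) * x powr p) * l powr (- p / (p + 1))"
    using assms by (simp add: powr_add[symmetric])
  also have "\<dots> \<le> (l powr (p / (p + 1)) * x powr p) powr ((p + 1) / p) / ((p + 1) / p)
       + (l powr (- p / (p + 1))) powr (p + 1) / (p + 1)"
    by (rule Youngs_inequality) (use assms in \<open>auto simp: field_simps\<close>)
  also have "\<dots> = p / (p + 1) * l * x powr (p + 1) + l powr (- p) / (p + 1)"
    using assms by (simp add: powr_mult powr_powr)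
  finally show ?thesis .
qed

lemma Young_balanced:
  fixes \<sigma> J p :: real
  assumes \<sigma>: "\<sigma> > 0" and J: "J > 0" and p: "p > 0"
  defines "l \<equiv> (J * \<sigma>) powr (1 / (p + 1))"
  shows "p / (p + 1) * l * (1 / \<sigma>) + l powr (- p) / (p + 1) * J
    = (1 / \<sigma>) powr (p / (p + 1)) * J powr (1 / (p + 1))"
proof -
  define T where "T = (1 / \<sigma>) powr (p / (p + 1)) * J powr (1 / (p + 1))"
  have "\<sigma> powr (1 / (p + 1)) * \<sigma> powr (p / (p + 1)) = \<sigma> powr 1"
    using p by (simp add: powr_add[symmetric] add_divide_distrib[symmetric] add.commute)
  then have l_div: "l / \<sigma> = T"
    using \<sigma> J by (simp add: l_def T_def powr_mult powr_divide field_simps)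
  have "- p / (p + 1) + 1 = 1 / (p + 1)"
    using p by (simp add: field_simps)
  then have "J powr (- p / (p + 1)) * J powr 1 = J powr (1 / (p + 1))"
    by (simp only: powr_add[symmetric])
  then have l_pow: "l powr (- p) * J = T"
    using \<sigma> J p by (simp add: l_def T_def powr_mult powr_powr powr_divide powr_minus_divide field_simps)
  have "p / (p + 1) * l * (1 / \<sigma>) + l powr (- p) / (p + 1) * J = p / (p + 1) * (l / \<sigma>) + (l powr (- p) * J) / (p + 1)"
    by simp
  also have "\<dots> = (p + 1) * T / (p + 1)"
    unfolding l_div l_pow by (simp add: add_divide_distrib algebra_simps)
  also have "\<dots> = T"
    using p by simp
  finally show ?thesis
    by (simp only: T_def)
qed

lemma abs_add_powr_le:
  fixes a b q :: real
  assumes "q \<ge> 0"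
  shows "\<bar>a + b\<bar> powr q \<le> 2 powr q * (\<bar>a\<bar> powr q + \<bar>b\<bar> powr q)"
proof -
  have "\<bar>a + b\<bar> powr q \<le> (2 * max \<bar>a\<bar> \<bar>b\<bar>) powr q"
    by (intro powr_mono2 assms) auto
  also have "\<dots> = 2 powr q * max \<bar>a\<bar> \<bar>b\<bar> powr q"
    by (simp add: powr_mult)
  also have "max \<bar>a\<bar> \<bar>b\<bar> powr q \<le> \<bar>a\<bar> powr q + \<bar>b\<bar> powr q"
    by (cases "\<bar>a\<bar> \<le> \<bar>b\<bar>") (auto simp: max_def)
  finally show ?thesis
    by (simp add: mult_left_mono)
qed

lemma powr_le_powr_add_one:
  fixes x p :: real
  assumes "x \<ge> 0" "p \<ge> 0"
  shows "x powr p \<le> x powr (p + 1) + 1"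
proof (cases "x \<le> 1")
  case True
  then have "x powr p \<le> 1"
    using assms by (intro powr_le1) auto
  then show ?thesis
    using powr_ge_zero[of x "p + 1"] by linarith
next
  case False
  then have "x powr p \<le> x powr (p + 1)"
    by (intro powr_mono) auto
  then show ?thesis
    by simp
qed

lemma abs_le_square_plus_one: "\<bar>x::real\<bar> \<le> x\<^sup>2 + 1"
proof -
  have "0 \<le> (\<bar>x\<bar> - 1)\<^sup>2"
    by simp
  also have "\<dots> = x\<^sup>2 + 1 - 2 * \<bar>x\<bar>"
    by (simp add: power2_eq_square algebra_simps)
  finally show ?thesis
    by simp
qed

lemma continuous_on_Icc_abs_bound:
  fixes f :: "real \<Rightarrow> real"
  assumes "continuous_on {a..b} f"
  shows "\<exists>K\<ge>0. \<forall>r\<in>{a..b}. \<bar>f r\<bar> \<le> K"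
proof -
  have "bounded (f ` {a..b})"
    using compact_continuous_image[OF assms compact_Icc] by (rule compact_imp_bounded)
  then obtain K where "K > 0" "\<forall>y\<in>f ` {a..b}. norm y \<le> K"
    by (auto simp: bounded_pos)
  then show ?thesis
    by (intro exI[of _ K]) auto
qed

lemma set_borel_measurable_cong:
  fixes f g :: "real \<Rightarrow> real"
  assumes "g \<in> borel_measurable borel" "S \<in> sets borel" "\<And>r. r \<in> S \<Longrightarrow> f r = g r"
  shows "set_borel_measurable lborel S f"
proof -
  have "(\<lambda>x. indicator S x *\<^sub>R g x) \<in> borel_measurable borel"
    using assms(1,2) by measurable
  moreover have "(\<lambda>x. indicator S x *\<^sub>R g x) = (\<lambda>x. indicator S x *\<^sub>R f x)"
    using assms(3) by (auto simp: indicator_def)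
  ultimately show ?thesis
    unfolding set_borel_measurable_def by simp
qed

definition extend_Ioo :: "(real \<Rightarrow> real) \<Rightarrow> real \<Rightarrow> real" where
  "extend_Ioo f r = (if r \<in> {0<..<1} then f r else 0)"

lemma borel_measurable_extend_Ioo:
  "continuous_on {0<..<1} f \<Longrightarrow> extend_Ioo f \<in> borel_measurable borel"
  unfolding extend_Ioo_def[abs_def] by (intro borel_measurable_continuous_on_if) auto

lemma set_integrable_Ioo_power: "set_integrable lborel {0<..<1::real} (\<lambda>r. c * r ^ k)"
proof -
  have "set_integrable lborel {0..1::real} (\<lambda>r. c * r ^ k)"
    by (rule borel_integrable_atLeastAtMost') (intro continuous_intros)
  then show ?thesis
    by (rule set_integrable_subset) auto
qed

lemma set_integrable_Ioo_bounded:
  fixes f :: "real \<Rightarrow> real"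
  assumes "set_borel_measurable lborel {0<..<1} f" "\<And>r. r \<in> {0<..<1} \<Longrightarrow> \<bar>f r\<bar> \<le> c"
  shows "set_integrable lborel {0<..<1} f"
proof (rule set_integrable_bound[OF set_integrable_Ioo_power[of c 0] assms(1)])
  show "AE x in lborel. x \<in> {0<..<1} \<longrightarrow> norm (f x) \<le> norm (c * x ^ 0)"
    using assms(2) by (intro AE_I2 impI) (force intro: order_trans[OF _ abs_ge_self])
qed

lemma set_integral_nonneg:
  fixes f :: "real \<Rightarrow> real"
  assumes "\<And>r. r \<in> A \<Longrightarrow> 0 \<le> f r"
  shows "0 \<le> (LINT r:A|lborel. f r)"
  unfolding set_lebesgue_integral_def
  by (rule Bochner_Integration.integral_nonneg) (use assms in \<open>auto simp: indicator_def\<close>)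

section \<open>The weight\<close>

lemma Vw_nonneg: "0 \<le> Vw R \<alpha> r"
  by (simp add: Vw_def)

lemma Vw_le_one:
  assumes "0 \<le> R" "R \<le> 1" "0 \<le> \<alpha>" "r \<in> {0..1}"
  shows "Vw R \<alpha> r \<le> 1"
  using assms unfolding Vw_def
  by (auto intro!: powr_le1 simp: field_simps)

lemma borel_measurable_Vw [measurable]: "Vw R \<alpha> \<in> borel_measurable borel"
  unfolding Vw_def by measurable

lemma has_integral_affine_powr:
  fixes c0 c1 x0 x1 \<alpha> :: real
  assumes "x0 \<le> x1" "c1 \<noteq> 0" "\<alpha> > 0"
    and nonneg: "\<And>r. r \<in> {x0..x1} \<Longrightarrow> 0 \<le> c0 + c1 * r"
    and pos: "\<And>r. r \<in> {x0<..<x1} \<Longrightarrow> 0 < c0 + c1 * r"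
    and f: "\<And>r. r \<in> {x0<..<x1} \<Longrightarrow> f r = (c0 + c1 * r) powr \<alpha>"
  shows "(f has_integral ((c0 + c1 * x1) powr (\<alpha> + 1) - (c0 + c1 * x0) powr (\<alpha> + 1)) / (c1 * (\<alpha> + 1))) {x0..x1}"
proof -
  let ?F = "\<lambda>r. (c0 + c1 * r) powr (\<alpha> + 1) / (c1 * (\<alpha> + 1))"
  have "((\<lambda>r. (c0 + c1 * r) powr \<alpha>) has_integral (?F x1 - ?F x0)) {x0..x1}"
  proof (rule fundamental_theorem_of_calculus_interior[OF assms(1)])
    show "continuous_on {x0..x1} ?F"
      using nonneg assms by (intro continuous_intros continuous_on_powr') auto
    fix x assume x: "x \<in> {x0<..<x1}"
    have "((\<lambda>r. (c0 + c1 * r) powr (\<alpha> + 1)) has_real_derivative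
        (\<alpha> + 1) * (c0 + c1 * x) powr (\<alpha> + 1 - 1) * c1) (at x)"
      using pos[OF x] by (auto intro!: derivative_eq_intros)
    then have "(?F has_real_derivative (c0 + c1 * x) powr \<alpha>) (at x)"
      using assms(2,3) by (auto dest: DERIV_cdivide[where c = "c1 * (\<alpha> + 1)"])
    then show "(?F has_vector_derivative (c0 + c1 * x) powr \<alpha>) (at x)"
      by (simp add: has_real_derivative_iff_has_vector_derivative)
  qed
  then have "((\<lambda>r. (c0 + c1 * r) powr \<alpha>) has_integral (?F x1 - ?F x0)) {x0<..<x1}"
    by (simp add: has_integral_Icc_iff_Ioo)
  then have "(f has_integral (?F x1 - ?F x0)) {x0<..<x1}"
    by (rule has_integral_cong[THEN iffD1, rotated]) (simp add: f)
  then show ?thesis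
    by (simp add: has_integral_Icc_iff_Ioo diff_divide_distrib)
qed

lemma Vw_has_integral:
  assumes "0 \<le> R" "R \<le> 1" "\<alpha> > 0"
  shows "(Vw R \<alpha> has_integral 1 / (\<alpha> + 1)) {0..1}"
proof -
  consider "R = 0" | "R = 1" | "0 < R" "R < 1"
    using assms by linarith
  then show ?thesis
  proof cases
    case 1
    have "(Vw R \<alpha> has_integral ((0 + 1 * 1) powr (\<alpha> + 1) - (0 + 1 * 0) powr (\<alpha> + 1)) / (1 * (\<alpha> + 1))) {0..1}"
      by (rule has_integral_affine_powr) (use assms 1 in \<open>auto simp: Vw_def\<close>)
    then show ?thesis
      by simp
  next
    case 2
    have "(Vw R \<alpha> has_integral ((1 + (-1) * 1) powr (\<alpha> + 1) - (1 + (-1) * 0) powr (\<alpha> + 1)) / ((-1) * (\<alpha> + 1))) {0..1}"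
      by (rule has_integral_affine_powr) (use assms 2 in \<open>auto simp: Vw_def\<close>)
    then show ?thesis
      by (simp add: minus_divide_right add.commute)
  next
    case 3
    have left: "(Vw R \<alpha> has_integral R / (\<alpha> + 1)) {0..R}"
    proof -
      have "(Vw R \<alpha> has_integral ((1 + (-1/R) * R) powr (\<alpha> + 1) - (1 + (-1/R) * 0) powr (\<alpha> + 1)) / ((-1/R) * (\<alpha> + 1))) {0..R}"
        by (rule has_integral_affine_powr) (use assms 3 in \<open>auto simp: Vw_def field_simps\<close>)
      then show ?thesis
        using 3 assms by (simp add: divide_simps)
    qed
    have right: "(Vw R \<alpha> has_integral (1 - R) / (\<alpha> + 1)) {R..1}"
    proof -
      have base: "1 - (1 - r) / (1 - R) = - R / (1 - R) + 1 / (1 - R) * r" for r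
        using 3 by (simp add: divide_simps)
      have "(Vw R \<alpha> has_integral ((- R / (1 - R) + 1 / (1 - R) * 1) powr (\<alpha> + 1)
          - (- R / (1 - R) + 1 / (1 - R) * R) powr (\<alpha> + 1)) / (1 / (1 - R) * (\<alpha> + 1))) {R..1}"
        by (rule has_integral_affine_powr) (use assms 3 in \<open>auto simp: Vw_def base intro: divide_right_mono divide_strict_right_mono\<close>)
      moreover have "- R / (1 - R) + 1 / (1 - R) * 1 = 1" "- R / (1 - R) + 1 / (1 - R) * R = 0"
        using 3 by (auto simp: field_simps)
      ultimately show ?thesis
        using 3 assms by (simp add: divide_simps)
    qed
    have "(Vw R \<alpha> has_integral (R / (\<alpha> + 1) + (1 - R) / (\<alpha> + 1))) {0..1}"
      using 3 by (intro has_integral_combine[OF _ _ left right]) auto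
    then show ?thesis
      by (simp add: add_divide_distrib[symmetric])
  qed
qed

lemma Vw_power_bounds:
  assumes "0 \<le> R" "R \<le> 1" "0 \<le> \<alpha>" "r \<in> {0<..<1}"
  shows "0 \<le> Vw R \<alpha> r * r ^ k" "Vw R \<alpha> r * r ^ k \<le> 1"
  using assms Vw_nonneg[of R \<alpha> r] Vw_le_one[of R \<alpha> r]
  by (auto intro!: mult_le_one power_le_one)

lemma set_integrable_Vw_power:
  assumes "0 \<le> R" "R \<le> 1" "0 \<le> \<alpha>"
  shows "set_integrable lborel {0<..<1} (\<lambda>r. Vw R \<alpha> r * r ^ k)"
proof (rule set_integrable_Ioo_bounded)
  show "set_borel_measurable lborel {0<..<1} (\<lambda>r. Vw R \<alpha> r * r ^ k)"
    by (rule set_borel_measurable_cong[where g = "\<lambda>r. Vw R \<alpha> r * r ^ k"]) auto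
  show "\<bar>Vw R \<alpha> r * r ^ k\<bar> \<le> 1" if "r \<in> {0<..<1}" for r
    using Vw_power_bounds[OF assms that] by simp
qed

lemma set_integral_Vw_power_le:
  assumes "0 \<le> R" "R \<le> 1" "0 < \<alpha>"
  shows "(LINT r:{0<..<1}|lborel. Vw R \<alpha> r * r ^ k) \<le> 1 / (\<alpha> + 1)"
proof -
  have "(LINT r:{0<..<1}|lborel. Vw R \<alpha> r * r ^ k) \<le> (LINT r:{0<..<1}|lborel. Vw R \<alpha> r * r ^ 0)"
    using assms Vw_nonneg[of R \<alpha>]
    by (intro set_integral_mono set_integrable_Vw_power) (auto intro!: mult_left_le power_le_one)
  also have "\<dots> = integral {0<..<1} (Vw R \<alpha>)"
    using set_borel_integral_eq_integral(2)[OF set_integrable_Vw_power[of R \<alpha> 0]] assms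
    by simp
  also have "\<dots> = integral {0..1} (Vw R \<alpha>)"
    by (simp add: integral_open_interval_real)
  also have "\<dots> = 1 / (\<alpha> + 1)"
    by (rule integral_unique[OF Vw_has_integral[OF assms]])
  finally show ?thesis .
qed

section \<open>Cutoff functions near the boundary\<close>

definition cutoff :: "real \<Rightarrow> real \<Rightarrow> real" where
  "cutoff a r = (if r \<le> a then 1 else 1 - 3 * ((r - a) / (1 - a))\<^sup>2 + 2 * ((r - a) / (1 - a)) ^ 3)"

definition cutoff_deriv :: "real \<Rightarrow> real \<Rightarrow> real" where
  "cutoff_deriv a r = (if r \<le> a then 0 else 6 * (((r - a) / (1 - a))\<^sup>2 - (r - a) / (1 - a)) / (1 - a))"

lemma has_real_derivative_cutoff:
  assumes "a < 1"
  shows "(cutoff a has_real_derivative cutoff_deriv a x) (at x)"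
proof -
  let ?z = "\<lambda>r. (r - a) / (1 - a)"
  have cubic: "((\<lambda>r. 1 - 3 * (?z r)\<^sup>2 + 2 * (?z r) ^ 3) has_vector_derivative
      6 * ((?z y)\<^sup>2 - ?z y) / (1 - a)) (at y within X)" for y X
  proof -
    have "((\<lambda>r. 1 - 3 * (?z r)\<^sup>2 + 2 * (?z r) ^ 3) has_real_derivative
        (- 6 * ?z y + 6 * (?z y)\<^sup>2) * (1 / (1 - a))) (at y within X)"
    proof (rule DERIV_chain2[of "\<lambda>z. 1 - 3 * z\<^sup>2 + 2 * z ^ 3"])
      have "((\<lambda>z. 1 - 3 * z\<^sup>2 + 2 * z ^ 3) has_real_derivative - 6 * z + 6 * z\<^sup>2) (at z)" for z :: real
        by (auto intro!: derivative_eq_intros simp: power2_eq_square)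
      then show "((\<lambda>z. 1 - 3 * z\<^sup>2 + 2 * z ^ 3) has_real_derivative - 6 * ?z y + 6 * (?z y)\<^sup>2) (at (?z y))" .
      show "(?z has_real_derivative 1 / (1 - a)) (at y within X)"
        using assms by (auto intro!: derivative_eq_intros)
    qed
    moreover have "(- 6 * z + 6 * z\<^sup>2) * (1 / c) = 6 * (z\<^sup>2 - z) / c" for z c :: real
      by (simp add: diff_divide_distrib algebra_simps)
    ultimately have "((\<lambda>r. 1 - 3 * (?z r)\<^sup>2 + 2 * (?z r) ^ 3) has_real_derivative
        6 * ((?z y)\<^sup>2 - ?z y) / (1 - a)) (at y within X)"
      by (simp only:)
    then show ?thesis
      by (simp add: has_real_derivative_iff_has_vector_derivative)
  qed
  have "((\<lambda>r. if r \<in> {..a} then 1 else 1 - 3 * (?z r)\<^sup>2 + 2 * (?z r) ^ 3) has_vector_derivative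
      (if x \<in> {..a} then 0 else 6 * ((?z x)\<^sup>2 - ?z x) / (1 - a))) (at x within UNIV)"
    by (rule has_vector_derivative_If_within_closures[where T = "{a<..}"]) (use cubic in auto)
  then show ?thesis
    unfolding cutoff_def[abs_def] cutoff_deriv_def
    by (simp add: has_real_derivative_iff_has_vector_derivative)
qed

lemma continuous_on_cutoff_deriv:
  assumes "a < 1"
  shows "continuous_on UNIV (cutoff_deriv a)"
proof -
  have "continuous_on ({..a} \<union> {a..})
      (\<lambda>r. if r \<le> a then 0 else 6 * (((r - a) / (1 - a))\<^sup>2 - (r - a) / (1 - a)) / (1 - a))"
    using assms by (intro continuous_on_cases continuous_intros) auto
  moreover have "{..a} \<union> {a..} = UNIV"
    by auto
  ultimately show ?thesis
    unfolding cutoff_deriv_def[abs_def] by simp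
qed

lemma cutoff_one: "a < 1 \<Longrightarrow> cutoff a 1 = 0"
  by (simp add: cutoff_def)

lemma cutoff_zero: "0 \<le> a \<Longrightarrow> cutoff a 0 = 1"
  by (simp add: cutoff_def)

lemma cutoff_deriv_eq_0: "r \<le> a \<Longrightarrow> cutoff_deriv a r = 0"
  by (simp add: cutoff_deriv_def)

lemma cutoff_bounds:
  assumes "a < 1" "r \<le> 1"
  shows "0 \<le> cutoff a r" "cutoff a r \<le> 1"
proof -
  have "0 \<le> cutoff a r \<and> cutoff a r \<le> 1"
  proof (cases "r \<le> a")
    case False
    define z where "z = (r - a) / (1 - a)"
    have z: "0 \<le> z" "z \<le> 1"
      using False assms by (auto simp: z_def field_simps)
    have "1 - 3 * z\<^sup>2 + 2 * z ^ 3 = (1 - z)\<^sup>2 * (1 + 2 * z)"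
      and "1 - 3 * z\<^sup>2 + 2 * z ^ 3 = 1 - z\<^sup>2 * (3 - 2 * z)"
      by (simp_all add: algebra_simps power2_eq_square power3_eq_cube)
    moreover have "0 \<le> (1 - z)\<^sup>2 * (1 + 2 * z)" "0 \<le> z\<^sup>2 * (3 - 2 * z)"
      using z by simp_all
    ultimately show ?thesis
      using False unfolding cutoff_def z_def[symmetric] by simp
  qed (simp add: cutoff_def)
  then show "0 \<le> cutoff a r" "cutoff a r \<le> 1"
    by auto
qed

lemma cutoff_deriv_nonpos:
  assumes "a < 1" "r \<le> 1"
  shows "cutoff_deriv a r \<le> 0"
proof (cases "r \<le> a")
  case False
  define z where "z = (r - a) / (1 - a)"
  have "0 \<le> z" "z \<le> 1"
    using False assms by (auto simp: z_def field_simps)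
  then have "z\<^sup>2 - z \<le> 0"
    by (simp add: power2_eq_square mult_left_le)
  then show ?thesis
    using False assms unfolding cutoff_deriv_def z_def[symmetric] by (simp add: divide_nonpos_pos)
qed (simp add: cutoff_deriv_def)

lemma set_integral_cutoff_deriv:
  assumes "0 \<le> a" "a < 1"
  shows "set_integrable lborel {0<..<1} (cutoff_deriv a)"
    and "(LINT r:{0<..<1}|lborel. cutoff_deriv a r) = -1"
proof -
  have "continuous_on {0..1} (cutoff_deriv a)"
    using continuous_on_cutoff_deriv[OF assms(2)] by (rule continuous_on_subset) auto
  then have "set_integrable lborel {0..1} (cutoff_deriv a)"
    by (rule borel_integrable_atLeastAtMost')
  then show integrable: "set_integrable lborel {0<..<1} (cutoff_deriv a)"
    by (rule set_integrable_subset) auto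
  have "(cutoff_deriv a has_integral (cutoff a 1 - cutoff a 0)) {0..1}"
    using has_real_derivative_cutoff[OF assms(2)]
    by (intro fundamental_theorem_of_calculus)
      (auto simp: has_real_derivative_iff_has_vector_derivative has_vector_derivative_at_within)
  then have "integral {0..1} (cutoff_deriv a) = -1"
    using assms by (simp add: integral_unique cutoff_one cutoff_zero)
  then show "(LINT r:{0<..<1}|lborel. cutoff_deriv a r) = -1"
    using set_borel_integral_eq_integral(2)[OF integrable] by (simp add: integral_open_interval_real)
qed

lemma cutoff_deriv_integral_approx:
  fixes g :: "real \<Rightarrow> real"
  assumes g: "continuous_on {0<..1} g" and \<delta>: "\<delta> > 0"
    and integrable: "\<And>a. 0 \<le> a \<Longrightarrow> a < 1 \<Longrightarrow> set_integrable lborel {0<..<1} (\<lambda>r. g r * cutoff_deriv a r)"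
  obtains a where "0 \<le> a" "a < 1" "\<bar>(LINT r:{0<..<1}|lborel. g r * cutoff_deriv a r) + g 1\<bar> \<le> \<delta>"
proof -
  obtain e where e: "e > 0" and near: "\<And>r. r \<in> {0<..1} \<Longrightarrow> dist r 1 < e \<Longrightarrow> dist (g r) (g 1) < \<delta>"
    using g \<delta> unfolding continuous_on_iff by (metis greaterThanAtMost_iff order_refl zero_less_one)
  define a where "a = max (1/2) (1 - e/2)"
  have a: "0 \<le> a" "a < 1"
    using e by (auto simp: a_def)
  have bounds: "(g 1 + \<delta>) * cutoff_deriv a r \<le> g r * cutoff_deriv a r
      \<and> g r * cutoff_deriv a r \<le> (g 1 - \<delta>) * cutoff_deriv a r" if r: "r \<in> {0<..<1}" for r
  proof (cases "r \<le> a")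
    case False
    then have "dist r 1 < e"
      using r e by (simp add: a_def dist_real_def)
    then have "\<bar>g r - g 1\<bar> < \<delta>"
      using near[of r] r by (simp add: dist_real_def)
    then have "g 1 - \<delta> \<le> g r" "g r \<le> g 1 + \<delta>"
      by (simp_all add: abs_less_iff)
    then show ?thesis
      using r cutoff_deriv_nonpos[OF a(2), of r] by (auto intro: mult_right_mono_neg)
  qed (simp add: cutoff_deriv_eq_0)
  have cutoff_integrable: "set_integrable lborel {0<..<1} (\<lambda>r. k * cutoff_deriv a r)" for k
    using set_integral_cutoff_deriv(1)[OF a] by (rule set_integrable_mult_right)
  have "(LINT r:{0<..<1}|lborel. (g 1 + \<delta>) * cutoff_deriv a r) \<le> (LINT r:{0<..<1}|lborel. g r * cutoff_deriv a r)"
    "(LINT r:{0<..<1}|lborel. g r * cutoff_deriv a r) \<le> (LINT r:{0<..<1}|lborel. (g 1 - \<delta>) * cutoff_deriv a r)"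
    using bounds by (intro set_integral_mono cutoff_integrable integrable[OF a]; simp)+
  then show ?thesis
    using set_integral_cutoff_deriv(2)[OF a] a
    by (intro that) (auto simp: abs_le_iff)
qed

lemma sphere_area_pos: "N \<ge> 1 \<Longrightarrow> sphere_area N > 0"
  unfolding sphere_area_def by (intro divide_pos_pos Gamma_real_pos) auto

lemma at_within_Ioc_nontrivial: "r \<in> {0<..1} \<Longrightarrow> at r within {0<..1::real} \<noteq> bot"
  by (simp add: trivial_limit_within)

lemma has_vector_derivative_rderiv:
  "v differentiable (at r within {0<..1}) \<Longrightarrow> (v has_vector_derivative rderiv v r) (at r within {0<..1})"
  unfolding rderiv_def by (simp add: vector_derivative_works)

lemma rderiv_eqI:
  "(v has_vector_derivative d) (at r within {0<..1}) \<Longrightarrow> r \<in> {0<..1} \<Longrightarrow> rderiv v r = d"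
  unfolding rderiv_def by (rule vector_derivative_within[OF at_within_Ioc_nontrivial])

lemma dirichlet_nonneg: "N \<ge> 1 \<Longrightarrow> 0 \<le> dirichlet N v"
  unfolding dirichlet_def
  by (intro mult_nonneg_nonneg set_integral_nonneg less_imp_le[OF sphere_area_pos]) auto

lemma S_rad_le_Rayleigh:
  assumes "N \<ge> 1" "rad_adm N R \<alpha> p v" "r \<in> {0<..<1}" "v r \<noteq> 0"
  shows "S_rad N R \<alpha> p * wnorm N R \<alpha> p v powr (2 / (p + 1)) \<le> dirichlet N v"
proof -
  let ?Q = "\<lambda>v. dirichlet N v / wnorm N R \<alpha> p v powr (2 / (p + 1))"
  have "bdd_below (?Q ` {v. rad_adm N R \<alpha> p v \<and> (\<exists>r\<in>{0<..<1}. v r \<noteq> 0)})"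
    using dirichlet_nonneg[OF assms(1)] by (intro bdd_belowI2[where m = 0] divide_nonneg_nonneg) auto
  then have "S_rad N R \<alpha> p \<le> ?Q v"
    unfolding S_rad_def using assms(2-4) by (intro cINF_lower) auto
  then show ?thesis
    using dirichlet_nonneg[OF assms(1), of v]
    by (cases "wnorm N R \<alpha> p v powr (2 / (p + 1)) = 0") (auto simp: pos_le_divide_eq)
qed

lemma
  assumes "rad_adm N R \<alpha> p v" "c \<ge> 0"
  shows rderiv_scale: "r \<in> {0<..1} \<Longrightarrow> rderiv (\<lambda>r. c * v r) r = c * rderiv v r"
    and dirichlet_scale: "dirichlet N (\<lambda>r. c * v r) = c\<^sup>2 * dirichlet N v"
    and wnorm_scale: "wnorm N R \<alpha> p (\<lambda>r. c * v r) = c powr (p + 1) * wnorm N R \<alpha> p v"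
proof -
  show scale: "rderiv (\<lambda>r. c * v r) r = c * rderiv v r" if "r \<in> {0<..1}" for r
    using assms(1) that unfolding rad_adm_def
    by (intro rderiv_eqI has_vector_derivative_mult_right has_vector_derivative_rderiv) auto
  have "(LINT r:{0<..<1}|lborel. (rderiv (\<lambda>r. c * v r) r)\<^sup>2 * r ^ (N - 1)) =
        (LINT r:{0<..<1}|lborel. c\<^sup>2 * ((rderiv v r)\<^sup>2 * r ^ (N - 1)))"
    by (rule set_lebesgue_integral_cong) (auto simp: scale power_mult_distrib)
  then show "dirichlet N (\<lambda>r. c * v r) = c\<^sup>2 * dirichlet N v"
    by (simp add: dirichlet_def)
  have "(LINT r:{0<..<1}|lborel. Vw R \<alpha> r * \<bar>c * v r\<bar> powr (p + 1) * r ^ (N - 1)) =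
        (LINT r:{0<..<1}|lborel. c powr (p + 1) * (Vw R \<alpha> r * \<bar>v r\<bar> powr (p + 1) * r ^ (N - 1)))"
    by (rule set_lebesgue_integral_cong) (use assms(2) in \<open>auto simp: abs_mult powr_mult\<close>)
  then show "wnorm N R \<alpha> p (\<lambda>r. c * v r) = c powr (p + 1) * wnorm N R \<alpha> p v"
    by (simp add: wnorm_def)
qed

text \<open>With c = S^(1/(p-1)) and T the bound from Young's inequality, the left-hand side is
  \<sigma> (c S T)^2, and S^((p+1)/(p-1)) (p-1)/(2(p+1)) is the energy of the rescaled minimiser.\<close>

lemma Kstar_energy_identity:
  fixes S p \<alpha> :: real
  assumes \<sigma>: "sphere_area N > 0" and S: "S > 0" and p: "p > 1" and \<alpha>: "\<alpha> > -1"
  shows "sphere_area N * (S powr (1 / (p - 1)) * (S * ((1 / sphere_area N) powr (p / (p + 1)) * (1 / (\<alpha> + 1)) powr (1 / (p + 1)))))\<^sup>2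
    = Kstar N p * (S powr ((p + 1) / (p - 1)) * ((p - 1) / (2 * (p + 1)))) powr (2 * p / (p + 1)) / (\<alpha> + 1) powr (2 / (p + 1))"
    (is "?L = ?R")
proof -
  define \<sigma> where "\<sigma> = sphere_area N"
  define k where "k = 2 * (p + 1) / (p - 1)"
  have pos: "\<sigma> > 0" "k > 0" "\<alpha> + 1 > 0"
    using \<sigma> p \<alpha> by (auto simp: \<sigma>_def k_def)
  have "ln ?L = ln \<sigma> + 2 * (ln S / (p - 1) + ln S - p / (p + 1) * ln \<sigma> - ln (\<alpha> + 1) / (p + 1))"
    using pos S by (simp add: \<sigma>_def[symmetric] ln_mult ln_div ln_realpow power_mult_distrib)
  also have "\<dots> = (1 - p) / (p + 1) * ln \<sigma> + 2 * p / (p + 1) * ln k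
      + 2 * p / (p + 1) * ((p + 1) / (p - 1) * ln S - ln k) - 2 / (p + 1) * ln (\<alpha> + 1)"
  proof -
    have "(p - 1) * inverse (p - 1) = 1" "(p + 1) * inverse (p + 1) = 1"
      using p by auto
    then show ?thesis
      unfolding divide_inverse by algebra
  qed
  also have "\<dots> = ln (\<sigma> powr ((1 - p) / (p + 1)) * k powr (2 * p / (p + 1))
      * (S powr ((p + 1) / (p - 1)) * (1 / k)) powr (2 * p / (p + 1)) / (\<alpha> + 1) powr (2 / (p + 1)))"
    using pos S by (simp add: ln_mult ln_div)
  also have "\<dots> = ln ?R"
  proof -
    have "(p - 1) / (2 * (p + 1)) = 1 / k"
      by (simp add: k_def)
    then show ?thesis
      unfolding Kstar_def \<sigma>_def k_def by simp
  qed
  finally have "ln ?L = ln ?R" .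
  moreover have "0 < ?L"
    using pos S by (simp add: \<sigma>_def[symmetric])
  moreover have "0 < ?R"
    using pos S p unfolding Kstar_def \<sigma>_def[symmetric] by (intro divide_pos_pos mult_pos_pos) auto
  ultimately show ?thesis
    by simp
qed

section \<open>Perturbations of a positive admissible profile\<close>

locale radial_problem =
  fixes N :: nat and p R \<alpha> :: real
  assumes N_pos: "N \<ge> 1" and p_pos: "p > 0"
    and R_nonneg: "0 \<le> R" and R_le_one: "R \<le> 1" and alpha_pos: "\<alpha> > 0"

locale positive_admissible_profile = radial_problem +
  fixes u :: "real \<Rightarrow> real"
  assumes admissible: "rad_adm N R \<alpha> p u"
    and positive: "\<And>r. r \<in> {0<..<1} \<Longrightarrow> u r > 0"
begin

lemma u_differentiable: "r \<in> {0<..1} \<Longrightarrow> u differentiable (at r within {0<..1})"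
  and continuous_on_rderiv: "continuous_on {0<..1} (rderiv u)"
  and u_one: "u 1 = 0"
  and set_integrable_rderiv_sq: "set_integrable lborel {0<..<1} (\<lambda>r. (rderiv u r)\<^sup>2 * r ^ (N - 1))"
  and set_integrable_Vw_abs_powr:
    "set_integrable lborel {0<..<1} (\<lambda>r. Vw R \<alpha> r * \<bar>u r\<bar> powr (p + 1) * r ^ (N - 1))"
  using admissible unfolding rad_adm_def by auto

lemma borel_measurable_extend_u [measurable]: "extend_Ioo u \<in> borel_measurable borel"
proof -
  have "continuous_on {0<..1} u"
    using u_differentiable
    by (auto simp: continuous_on_eq_continuous_within differentiable_imp_continuous_within)
  then show ?thesis
    by (intro borel_measurable_extend_Ioo) (auto elim: continuous_on_subset)
qed

lemma borel_measurable_extend_rderiv [measurable]: "extend_Ioo (rderiv u) \<in> borel_measurable borel"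
  by (intro borel_measurable_extend_Ioo) (auto intro: continuous_on_subset[OF continuous_on_rderiv])

lemma S_rad_nonneg: "0 \<le> S_rad N R \<alpha> p"
proof -
  have "u \<in> {v. rad_adm N R \<alpha> p v \<and> (\<exists>r\<in>{0<..<1}. v r \<noteq> 0)}"
    using admissible positive[of "1/2"] by (auto intro!: bexI[of _ "1/2"])
  then show ?thesis
    unfolding S_rad_def using dirichlet_nonneg[OF N_pos]
    by (intro cINF_greatest) (auto intro!: divide_nonneg_nonneg)
qed

lemma set_integrable_Vw_powr_mult:
  assumes h [measurable]: "h \<in> borel_measurable borel" and bound: "\<And>r. r \<in> {0<..<1} \<Longrightarrow> \<bar>h r\<bar> \<le> K"
  shows "set_integrable lborel {0<..<1} (\<lambda>r. Vw R \<alpha> r * u r powr p * h r * r ^ (N - 1))"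
proof (rule set_integrable_bound[where f = "\<lambda>r. K * (Vw R \<alpha> r * \<bar>u r\<bar> powr (p + 1) * r ^ (N - 1)) + K * (1 * r ^ (N - 1))"])
  show "set_integrable lborel {0<..<1} (\<lambda>r. K * (Vw R \<alpha> r * \<bar>u r\<bar> powr (p + 1) * r ^ (N - 1)) + K * (1 * r ^ (N - 1)))"
    by (intro set_integral_add(1) set_integrable_mult_right set_integrable_Vw_abs_powr set_integrable_Ioo_power)
  show "set_borel_measurable lborel {0<..<1} (\<lambda>r. Vw R \<alpha> r * u r powr p * h r * r ^ (N - 1))"
    by (rule set_borel_measurable_cong[where g = "\<lambda>r. Vw R \<alpha> r * extend_Ioo u r powr p * h r * r ^ (N - 1)"])
      (measurable, auto simp: extend_Ioo_def)
  have K: "K \<ge> 0"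
    using bound[of "1/2"] by simp
  show "AE r in lborel. r \<in> {0<..<1} \<longrightarrow> norm (Vw R \<alpha> r * u r powr p * h r * r ^ (N - 1))
      \<le> norm (K * (Vw R \<alpha> r * \<bar>u r\<bar> powr (p + 1) * r ^ (N - 1)) + K * (1 * r ^ (N - 1)))"
  proof (intro AE_I2 impI)
    fix r :: real assume r: "r \<in> {0<..<1}"
    have V: "0 \<le> Vw R \<alpha> r" "Vw R \<alpha> r \<le> 1"
      using r R_nonneg R_le_one alpha_pos by (auto intro!: Vw_nonneg Vw_le_one)
    have w: "0 \<le> r ^ (N - 1)"
      using r by simp
    have "u r powr p * \<bar>h r\<bar> \<le> (u r powr (p + 1) + 1) * K"
      using powr_le_powr_add_one[of "u r" p] positive[OF r] p_pos bound[OF r]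
      by (intro mult_mono) auto
    then have "(Vw R \<alpha> r * r ^ (N - 1)) * (u r powr p * \<bar>h r\<bar>) \<le> (Vw R \<alpha> r * r ^ (N - 1)) * ((u r powr (p + 1) + 1) * K)"
      using V w by (intro mult_left_mono) auto
    moreover have "Vw R \<alpha> r * K * r ^ (N - 1) \<le> K * r ^ (N - 1)"
      using V w K by (intro mult_right_mono mult_left_le_one_le) auto
    ultimately show "norm (Vw R \<alpha> r * u r powr p * h r * r ^ (N - 1))
        \<le> norm (K * (Vw R \<alpha> r * \<bar>u r\<bar> powr (p + 1) * r ^ (N - 1)) + K * (1 * r ^ (N - 1)))"
      using V w K positive[OF r] by (simp add: abs_mult algebra_simps)
  qed
qed

lemma set_integrable_Vw_powr:
  "set_integrable lborel {0<..<1} (\<lambda>r. Vw R \<alpha> r * u r powr p * r ^ (N - 1))"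
  using set_integrable_Vw_powr_mult[of "\<lambda>_. 1" 1] by simp

lemma Vw_powr_nonneg: "r \<in> {0<..<1} \<Longrightarrow> 0 \<le> Vw R \<alpha> r * u r powr p * r ^ (N - 1)"
  using Vw_nonneg[of R \<alpha> r] by simp

end

locale test_perturbation = positive_admissible_profile +
  fixes \<phi> \<phi>' :: "real \<Rightarrow> real"
  assumes test_deriv: "\<And>r. (\<phi> has_real_derivative \<phi>' r) (at r)"
    and continuous_test_deriv: "continuous_on UNIV \<phi>'"
    and test_one: "\<phi> 1 = 0"
begin

lemma continuous_test: "continuous_on UNIV \<phi>"
  using test_deriv by (intro continuous_at_imp_continuous_on) (blast intro: DERIV_isCont)

lemma borel_measurable_test [measurable]: "\<phi> \<in> borel_measurable borel" "\<phi>' \<in> borel_measurable borel"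
  using continuous_test continuous_test_deriv by (auto intro: borel_measurable_continuous_onI)

lemma test_bounds:
  obtains K where "K \<ge> 0" "\<And>r. r \<in> {0..1} \<Longrightarrow> \<bar>\<phi> r\<bar> \<le> K" "\<And>r. r \<in> {0..1} \<Longrightarrow> \<bar>\<phi>' r\<bar> \<le> K"
proof -
  obtain K1 where K1: "\<forall>r\<in>{0..1}. \<bar>\<phi> r\<bar> \<le> K1"
    using continuous_on_Icc_abs_bound[OF continuous_on_subset[OF continuous_test subset_UNIV]] by blast
  obtain K2 where K2: "K2 \<ge> 0" "\<forall>r\<in>{0..1}. \<bar>\<phi>' r\<bar> \<le> K2"
    using continuous_on_Icc_abs_bound[OF continuous_on_subset[OF continuous_test_deriv subset_UNIV]] by blast
  show ?thesis
    using K1 K2 by (intro that[of "max K1 K2"]) (auto simp: le_max_iff_disj)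
qed

lemma rderiv_perturb:
  assumes "r \<in> {0<..1}"
  shows "rderiv (\<lambda>s. u s + t * \<phi> s) r = rderiv u r + t * \<phi>' r"
proof (rule rderiv_eqI[OF has_vector_derivative_add[OF has_vector_derivative_rderiv] assms])
  show "u differentiable at r within {0<..1}"
    using u_differentiable[OF assms] .
  show "((\<lambda>s. t * \<phi> s) has_vector_derivative t * \<phi>' r) (at r within {0<..1})"
    using DERIV_cmult[OF test_deriv, of t r]
    by (simp add: has_real_derivative_iff_has_vector_derivative has_vector_derivative_at_within)
qed

lemma set_integrable_rderiv_mult_test_deriv:
  "set_integrable lborel {0<..<1} (\<lambda>r. rderiv u r * \<phi>' r * r ^ (N - 1))"
proof -
  obtain K where K: "K \<ge> 0" "\<And>r. r \<in> {0..1} \<Longrightarrow> \<bar>\<phi> r\<bar> \<le> K" "\<And>r. r \<in> {0..1} \<Longrightarrow> \<bar>\<phi>' r\<bar> \<le> K"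
    using test_bounds by blast
  show ?thesis
  proof (rule set_integrable_bound[where f = "\<lambda>r. K * ((rderiv u r)\<^sup>2 * r ^ (N - 1)) + K * (1 * r ^ (N - 1))"])
    show "set_integrable lborel {0<..<1} (\<lambda>r. K * ((rderiv u r)\<^sup>2 * r ^ (N - 1)) + K * (1 * r ^ (N - 1)))"
      by (intro set_integral_add(1) set_integrable_mult_right set_integrable_rderiv_sq set_integrable_Ioo_power)
    show "set_borel_measurable lborel {0<..<1} (\<lambda>r. rderiv u r * \<phi>' r * r ^ (N - 1))"
      by (rule set_borel_measurable_cong[where g = "\<lambda>r. extend_Ioo (rderiv u) r * \<phi>' r * r ^ (N - 1)"])
        (measurable, auto simp: extend_Ioo_def)
    show "AE r in lborel. r \<in> {0<..<1} \<longrightarrow> norm (rderiv u r * \<phi>' r * r ^ (N - 1))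
        \<le> norm (K * ((rderiv u r)\<^sup>2 * r ^ (N - 1)) + K * (1 * r ^ (N - 1)))"
    proof (intro AE_I2 impI)
      fix r :: real assume r: "r \<in> {0<..<1}"
      have "\<bar>rderiv u r\<bar> * \<bar>\<phi>' r\<bar> \<le> ((rderiv u r)\<^sup>2 + 1) * K"
        using abs_le_square_plus_one K(3)[of r] r by (intro mult_mono) auto
      then have "\<bar>rderiv u r\<bar> * \<bar>\<phi>' r\<bar> * r ^ (N - 1) \<le> ((rderiv u r)\<^sup>2 + 1) * K * r ^ (N - 1)"
        using r by (intro mult_right_mono) auto
      then show "norm (rderiv u r * \<phi>' r * r ^ (N - 1))
          \<le> norm (K * ((rderiv u r)\<^sup>2 * r ^ (N - 1)) + K * (1 * r ^ (N - 1)))"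
        using r K(1) by (simp add: abs_mult algebra_simps)
    qed
  qed
qed

lemma set_integrable_test_deriv_sq: "set_integrable lborel {0<..<1} (\<lambda>r. (\<phi>' r)\<^sup>2 * r ^ (N - 1))"
proof -
  obtain K where K: "K \<ge> 0" "\<And>r. r \<in> {0..1} \<Longrightarrow> \<bar>\<phi> r\<bar> \<le> K" "\<And>r. r \<in> {0..1} \<Longrightarrow> \<bar>\<phi>' r\<bar> \<le> K"
    using test_bounds by blast
  show ?thesis
  proof (rule set_integrable_Ioo_bounded[where c = "K\<^sup>2"])
    show "set_borel_measurable lborel {0<..<1} (\<lambda>r. (\<phi>' r)\<^sup>2 * r ^ (N - 1))"
      by (rule set_borel_measurable_cong[where g = "\<lambda>r. (\<phi>' r)\<^sup>2 * r ^ (N - 1)"]) auto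
    fix r :: real assume r: "r \<in> {0<..<1}"
    have "(\<phi>' r)\<^sup>2 \<le> K\<^sup>2"
      using power_mono[OF K(3)[of r] abs_ge_zero, of 2] r by simp
    moreover have "r ^ (N - 1) \<le> 1"
      using r by (simp add: power_le_one)
    ultimately have "(\<phi>' r)\<^sup>2 * r ^ (N - 1) \<le> K\<^sup>2 * 1"
      using r by (intro mult_mono) auto
    then show "\<bar>(\<phi>' r)\<^sup>2 * r ^ (N - 1)\<bar> \<le> K\<^sup>2"
      using r by simp
  qed
qed

lemma set_integrable_Vw_powr_mult_test:
  "set_integrable lborel {0<..<1} (\<lambda>r. Vw R \<alpha> r * u r powr p * \<phi> r * r ^ (N - 1))"
proof -
  obtain K where K: "K \<ge> 0" "\<And>r. r \<in> {0..1} \<Longrightarrow> \<bar>\<phi> r\<bar> \<le> K" "\<And>r. r \<in> {0..1} \<Longrightarrow> \<bar>\<phi>' r\<bar> \<le> K"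
    using test_bounds by blast
  then show ?thesis
    by (intro set_integrable_Vw_powr_mult[where K = K]) auto
qed

lemma set_integrable_Vw_abs_powr_perturb:
  "set_integrable lborel {0<..<1} (\<lambda>r. Vw R \<alpha> r * \<bar>u r + t * \<phi> r\<bar> powr (p + 1) * r ^ (N - 1))"
proof -
  obtain K where K: "K \<ge> 0" "\<And>r. r \<in> {0..1} \<Longrightarrow> \<bar>\<phi> r\<bar> \<le> K" "\<And>r. r \<in> {0..1} \<Longrightarrow> \<bar>\<phi>' r\<bar> \<le> K"
    using test_bounds by blast
  define P where "P = (2::real) powr (p + 1)"
  define T where "T = \<bar>t * K\<bar> powr (p + 1)"
  show ?thesis
  proof (rule set_integrable_bound[where f = "\<lambda>r. P * (Vw R \<alpha> r * \<bar>u r\<bar> powr (p + 1) * r ^ (N - 1)) + (P * T) * (1 * r ^ (N - 1))"])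
    show "set_integrable lborel {0<..<1} (\<lambda>r. P * (Vw R \<alpha> r * \<bar>u r\<bar> powr (p + 1) * r ^ (N - 1)) + (P * T) * (1 * r ^ (N - 1)))"
      by (intro set_integral_add(1) set_integrable_mult_right set_integrable_Vw_abs_powr set_integrable_Ioo_power)
    show "set_borel_measurable lborel {0<..<1} (\<lambda>r. Vw R \<alpha> r * \<bar>u r + t * \<phi> r\<bar> powr (p + 1) * r ^ (N - 1))"
      by (rule set_borel_measurable_cong[where g = "\<lambda>r. Vw R \<alpha> r * \<bar>extend_Ioo u r + t * \<phi> r\<bar> powr (p + 1) * r ^ (N - 1)"])
        (measurable, auto simp: extend_Ioo_def)
    show "AE r in lborel. r \<in> {0<..<1} \<longrightarrow> norm (Vw R \<alpha> r * \<bar>u r + t * \<phi> r\<bar> powr (p + 1) * r ^ (N - 1))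
        \<le> norm (P * (Vw R \<alpha> r * \<bar>u r\<bar> powr (p + 1) * r ^ (N - 1)) + (P * T) * (1 * r ^ (N - 1)))"
    proof (intro AE_I2 impI)
      fix r :: real assume r: "r \<in> {0<..<1}"
      have V: "0 \<le> Vw R \<alpha> r" "Vw R \<alpha> r \<le> 1"
        using r R_nonneg R_le_one alpha_pos by (auto intro!: Vw_nonneg Vw_le_one)
      have w: "0 \<le> r ^ (N - 1)"
        using r by simp
      have "\<bar>t * \<phi> r\<bar> powr (p + 1) \<le> T"
        unfolding T_def using K r p_pos by (intro powr_mono2) (auto simp: abs_mult intro: mult_left_mono)
      then have "P * (\<bar>u r\<bar> powr (p + 1) + \<bar>t * \<phi> r\<bar> powr (p + 1)) \<le> P * (\<bar>u r\<bar> powr (p + 1) + T)"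
        unfolding P_def by (intro mult_left_mono) auto
      then have "\<bar>u r + t * \<phi> r\<bar> powr (p + 1) \<le> P * (\<bar>u r\<bar> powr (p + 1) + T)"
        using abs_add_powr_le[of "p + 1" "u r" "t * \<phi> r"] p_pos unfolding P_def by linarith
      then have "Vw R \<alpha> r * r ^ (N - 1) * \<bar>u r + t * \<phi> r\<bar> powr (p + 1)
          \<le> Vw R \<alpha> r * r ^ (N - 1) * (P * (\<bar>u r\<bar> powr (p + 1) + T))"
        using V w by (intro mult_left_mono) auto
      moreover have "Vw R \<alpha> r * (P * T) * r ^ (N - 1) \<le> (P * T) * r ^ (N - 1)"
        using V w by (intro mult_right_mono mult_left_le_one_le) (auto simp: P_def T_def)
      ultimately show "norm (Vw R \<alpha> r * \<bar>u r + t * \<phi> r\<bar> powr (p + 1) * r ^ (N - 1))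
          \<le> norm (P * (Vw R \<alpha> r * \<bar>u r\<bar> powr (p + 1) * r ^ (N - 1)) + (P * T) * (1 * r ^ (N - 1)))"
        using V w by (simp add: P_def T_def algebra_simps)
    qed
  qed
qed

lemma rderiv_perturb_sq:
  assumes "r \<in> {0<..<1}"
  shows "(rderiv (\<lambda>s. u s + t * \<phi> s) r)\<^sup>2 * r ^ (N - 1) = (rderiv u r)\<^sup>2 * r ^ (N - 1)
    + (2 * t) * (rderiv u r * \<phi>' r * r ^ (N - 1)) + t\<^sup>2 * ((\<phi>' r)\<^sup>2 * r ^ (N - 1))"
  using assms by (simp add: rderiv_perturb power2_eq_square algebra_simps)

lemma rad_adm_perturb: "rad_adm N R \<alpha> p (\<lambda>r. u r + t * \<phi> r)"
  unfolding rad_adm_def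
proof (intro conjI ballI)
  fix r :: real assume r: "r \<in> {0<..1}"
  have "((\<lambda>s. t * \<phi> s) has_real_derivative t * \<phi>' r) (at r within {0<..1})"
    using DERIV_cmult[OF test_deriv, of t r] by (rule has_field_derivative_at_within)
  then show "(\<lambda>r. u r + t * \<phi> r) differentiable at r within {0<..1}"
    using u_differentiable[OF r] by (intro differentiable_add) (auto simp: real_differentiable_def)
next
  have "continuous_on {0<..1} (\<lambda>r. rderiv u r + t * \<phi>' r)"
    by (intro continuous_intros continuous_on_rderiv continuous_on_subset[OF continuous_test_deriv]) auto
  then show "continuous_on {0<..1} (rderiv (\<lambda>r. u r + t * \<phi> r))"
    by (rule continuous_on_eq) (simp add: rderiv_perturb)
next
  have "set_integrable lborel {0<..<1} (\<lambda>r. (rderiv u r)\<^sup>2 * r ^ (N - 1)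
      + (2 * t) * (rderiv u r * \<phi>' r * r ^ (N - 1)) + t\<^sup>2 * ((\<phi>' r)\<^sup>2 * r ^ (N - 1)))"
    by (intro set_integral_add(1) set_integrable_mult_right set_integrable_rderiv_sq
        set_integrable_rderiv_mult_test_deriv set_integrable_test_deriv_sq)
  moreover have "set_integrable lborel {0<..<1} (\<lambda>r. (rderiv (\<lambda>s. u s + t * \<phi> s) r)\<^sup>2 * r ^ (N - 1))
      = set_integrable lborel {0<..<1} (\<lambda>r. (rderiv u r)\<^sup>2 * r ^ (N - 1)
      + (2 * t) * (rderiv u r * \<phi>' r * r ^ (N - 1)) + t\<^sup>2 * ((\<phi>' r)\<^sup>2 * r ^ (N - 1)))"
    by (rule set_integrable_cong refl rderiv_perturb_sq | assumption)+
  ultimately show "set_integrable lborel {0<..<1} (\<lambda>r. (rderiv (\<lambda>r. u r + t * \<phi> r) r)\<^sup>2 * r ^ (N - 1))"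
    by (simp only:)
qed (use u_one test_one set_integrable_Vw_abs_powr_perturb in auto)

lemma dirichlet_perturb:
  "dirichlet N (\<lambda>r. u r + t * \<phi> r) = dirichlet N u + sphere_area N *
     (2 * t * (LINT r:{0<..<1}|lborel. rderiv u r * \<phi>' r * r ^ (N - 1))
      + t\<^sup>2 * (LINT r:{0<..<1}|lborel. (\<phi>' r)\<^sup>2 * r ^ (N - 1)))"
proof -
  have "(LINT r:{0<..<1}|lborel. (rderiv (\<lambda>s. u s + t * \<phi> s) r)\<^sup>2 * r ^ (N - 1))
      = (LINT r:{0<..<1}|lborel. (rderiv u r)\<^sup>2 * r ^ (N - 1)
          + (2 * t) * (rderiv u r * \<phi>' r * r ^ (N - 1)) + t\<^sup>2 * ((\<phi>' r)\<^sup>2 * r ^ (N - 1)))"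
    by (rule set_lebesgue_integral_cong) (simp, blast intro: rderiv_perturb_sq)
  also have "\<dots> = (LINT r:{0<..<1}|lborel. (rderiv u r)\<^sup>2 * r ^ (N - 1))
      + 2 * t * (LINT r:{0<..<1}|lborel. rderiv u r * \<phi>' r * r ^ (N - 1))
      + t\<^sup>2 * (LINT r:{0<..<1}|lborel. (\<phi>' r)\<^sup>2 * r ^ (N - 1))"
    using set_integrable_rderiv_sq set_integrable_rderiv_mult_test_deriv set_integrable_test_deriv_sq
    by simp
  finally show ?thesis
    by (simp add: dirichlet_def algebra_simps)
qed

lemma wnorm_perturb_ge:
  "wnorm N R \<alpha> p u + (p + 1) * t * sphere_area N * (LINT r:{0<..<1}|lborel. Vw R \<alpha> r * u r powr p * \<phi> r * r ^ (N - 1))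
    \<le> wnorm N R \<alpha> p (\<lambda>r. u r + t * \<phi> r)"
proof -
  have "(LINT r:{0<..<1}|lborel. Vw R \<alpha> r * \<bar>u r\<bar> powr (p + 1) * r ^ (N - 1)
          + ((p + 1) * t) * (Vw R \<alpha> r * u r powr p * \<phi> r * r ^ (N - 1)))
      \<le> (LINT r:{0<..<1}|lborel. Vw R \<alpha> r * \<bar>u r + t * \<phi> r\<bar> powr (p + 1) * r ^ (N - 1))"
  proof (intro set_integral_mono set_integral_add(1) set_integrable_mult_right set_integrable_Vw_abs_powr
      set_integrable_Vw_powr_mult_test set_integrable_Vw_abs_powr_perturb)
    fix r :: real assume r: "r \<in> {0<..<1}"
    have "u r powr (p + 1) + (p + 1) * u r powr p * (u r + t * \<phi> r - u r) \<le> \<bar>u r + t * \<phi> r\<bar> powr (p + 1)"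
      using positive[OF r] p_pos by (rule powr_tangent_le)
    moreover have "0 \<le> Vw R \<alpha> r * r ^ (N - 1)"
      using r Vw_nonneg[of R \<alpha> r] by simp
    ultimately have "Vw R \<alpha> r * r ^ (N - 1) * (u r powr (p + 1) + (p + 1) * u r powr p * (t * \<phi> r))
        \<le> Vw R \<alpha> r * r ^ (N - 1) * \<bar>u r + t * \<phi> r\<bar> powr (p + 1)"
      by (intro mult_left_mono) auto
    then show "Vw R \<alpha> r * \<bar>u r\<bar> powr (p + 1) * r ^ (N - 1) + (p + 1) * t * (Vw R \<alpha> r * u r powr p * \<phi> r * r ^ (N - 1))
        \<le> Vw R \<alpha> r * \<bar>u r + t * \<phi> r\<bar> powr (p + 1) * r ^ (N - 1)"
      using positive[OF r] by (simp add: algebra_simps)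
  qed
  moreover have "(LINT r:{0<..<1}|lborel. Vw R \<alpha> r * \<bar>u r\<bar> powr (p + 1) * r ^ (N - 1)
          + ((p + 1) * t) * (Vw R \<alpha> r * u r powr p * \<phi> r * r ^ (N - 1)))
      = (LINT r:{0<..<1}|lborel. Vw R \<alpha> r * \<bar>u r\<bar> powr (p + 1) * r ^ (N - 1))
          + (p + 1) * t * (LINT r:{0<..<1}|lborel. Vw R \<alpha> r * u r powr p * \<phi> r * r ^ (N - 1))"
    using set_integrable_Vw_abs_powr set_integrable_Vw_powr_mult_test
    by simp
  ultimately have "(LINT r:{0<..<1}|lborel. Vw R \<alpha> r * \<bar>u r\<bar> powr (p + 1) * r ^ (N - 1))
          + (p + 1) * t * (LINT r:{0<..<1}|lborel. Vw R \<alpha> r * u r powr p * \<phi> r * r ^ (N - 1))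
      \<le> (LINT r:{0<..<1}|lborel. Vw R \<alpha> r * \<bar>u r + t * \<phi> r\<bar> powr (p + 1) * r ^ (N - 1))"
    by simp
  then have "sphere_area N * ((LINT r:{0<..<1}|lborel. Vw R \<alpha> r * \<bar>u r\<bar> powr (p + 1) * r ^ (N - 1))
          + (p + 1) * t * (LINT r:{0<..<1}|lborel. Vw R \<alpha> r * u r powr p * \<phi> r * r ^ (N - 1)))
      \<le> sphere_area N * (LINT r:{0<..<1}|lborel. Vw R \<alpha> r * \<bar>u r + t * \<phi> r\<bar> powr (p + 1) * r ^ (N - 1))"
    using sphere_area_pos[OF N_pos] by (intro mult_left_mono) auto
  then show ?thesis
    by (simp add: wnorm_def algebra_simps)
qed

lemma S_rad_le_dirichlet_perturb:
  assumes wnorm_one: "wnorm N R \<alpha> p u = 1"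
  obtains \<delta> where "\<delta> > 0" "\<And>t. \<bar>t\<bar> < \<delta> \<Longrightarrow>
    S_rad N R \<alpha> p * (1 + (p + 1) * sphere_area N * (LINT r:{0<..<1}|lborel. Vw R \<alpha> r * u r powr p * \<phi> r * r ^ (N - 1)) * t)
      powr (2 / (p + 1)) \<le> dirichlet N (\<lambda>r. u r + t * \<phi> r)"
proof -
  define c where "c = (p + 1) * sphere_area N * (LINT r:{0<..<1}|lborel. Vw R \<alpha> r * u r powr p * \<phi> r * r ^ (N - 1))"
  obtain K where K: "K \<ge> 0" "\<And>r. r \<in> {0..1} \<Longrightarrow> \<bar>\<phi> r\<bar> \<le> K" "\<And>r. r \<in> {0..1} \<Longrightarrow> \<bar>\<phi>' r\<bar> \<le> K"
    using test_bounds by blast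
  \<comment> \<open>Small \<open>t\<close> keep \<open>u + t \<phi>\<close> nonzero at \<open>1/2\<close> (so it competes for \<open>S_rad\<close>)
    and \<open>1 + c t\<close> nonnegative.\<close>
  define \<delta> where "\<delta> = min (u (1/2) / (K + 1)) (1 / (\<bar>c\<bar> + 1))"
  have "\<delta> > 0"
    using positive[of "1/2"] K(1) by (simp add: \<delta>_def)
  moreover have "S_rad N R \<alpha> p * (1 + c * t) powr (2 / (p + 1)) \<le> dirichlet N (\<lambda>r. u r + t * \<phi> r)"
    if t: "\<bar>t\<bar> < \<delta>" for t
  proof -
    have "\<bar>t\<bar> < u (1/2) / (K + 1)" "\<bar>t\<bar> < 1 / (\<bar>c\<bar> + 1)"
      using t by (simp_all add: \<delta>_def)
    then have small: "\<bar>t\<bar> * (K + 1) < u (1/2)" "\<bar>t\<bar> * (\<bar>c\<bar> + 1) < 1"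
      using K(1) by (simp_all add: pos_less_divide_eq)
    have "\<bar>t * \<phi> (1/2)\<bar> \<le> \<bar>t\<bar> * (K + 1)"
      unfolding abs_mult using K(2)[of "1/2"] by (intro mult_left_mono) auto
    then have nonzero: "u (1/2) + t * \<phi> (1/2) \<noteq> 0"
      using small(1) by linarith
    have "\<bar>c * t\<bar> \<le> \<bar>t\<bar> * (\<bar>c\<bar> + 1)"
      by (simp add: abs_mult algebra_simps)
    then have "0 \<le> 1 + c * t"
      using small(2) by (simp add: abs_less_iff abs_le_iff)
    moreover have "1 + c * t \<le> wnorm N R \<alpha> p (\<lambda>r. u r + t * \<phi> r)"
      using wnorm_perturb_ge[of t] wnorm_one by (simp add: c_def algebra_simps)
    ultimately have "S_rad N R \<alpha> p * (1 + c * t) powr (2 / (p + 1))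
        \<le> S_rad N R \<alpha> p * wnorm N R \<alpha> p (\<lambda>r. u r + t * \<phi> r) powr (2 / (p + 1))"
      using S_rad_nonneg p_pos by (intro mult_left_mono powr_mono2) auto
    also have "\<dots> \<le> dirichlet N (\<lambda>r. u r + t * \<phi> r)"
      using nonzero by (intro S_rad_le_Rayleigh N_pos rad_adm_perturb) auto
    finally show ?thesis .
  qed
  ultimately show ?thesis
    by (intro that) (auto simp: c_def)
qed

lemma weak_Euler_Lagrange:
  assumes wnorm_one: "wnorm N R \<alpha> p u = 1" and minimal: "dirichlet N u = S_rad N R \<alpha> p"
  shows "(LINT r:{0<..<1}|lborel. rderiv u r * \<phi>' r * r ^ (N - 1))
    = S_rad N R \<alpha> p * (LINT r:{0<..<1}|lborel. Vw R \<alpha> r * u r powr p * \<phi> r * r ^ (N - 1))"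
proof -
  define \<sigma> where "\<sigma> = sphere_area N"
  define S where "S = S_rad N R \<alpha> p"
  define A where "A = (LINT r:{0<..<1}|lborel. rderiv u r * \<phi>' r * r ^ (N - 1))"
  define B where "B = (LINT r:{0<..<1}|lborel. (\<phi>' r)\<^sup>2 * r ^ (N - 1))"
  define C where "C = (LINT r:{0<..<1}|lborel. Vw R \<alpha> r * u r powr p * \<phi> r * r ^ (N - 1))"
  define q where "q = 2 / (p + 1)"
  define g where "g t = dirichlet N (\<lambda>r. u r + t * \<phi> r) - S * (1 + (p + 1) * \<sigma> * C * t) powr q" for t
  have g: "g t = S + \<sigma> * (2 * t * A + t\<^sup>2 * B) - S * (1 + (p + 1) * \<sigma> * C * t) powr q" for t
    using minimal by (simp add: g_def dirichlet_perturb S_def \<sigma>_def A_def B_def)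
  obtain \<delta> where \<delta>: "\<delta> > 0"
    and bound: "\<And>t. \<bar>t\<bar> < \<delta> \<Longrightarrow> S * (1 + (p + 1) * \<sigma> * C * t) powr q \<le> dirichlet N (\<lambda>r. u r + t * \<phi> r)"
    using S_rad_le_dirichlet_perturb[OF wnorm_one] unfolding S_def \<sigma>_def C_def q_def by blast
  have "\<sigma> * (2 * A) - S * (q * ((p + 1) * \<sigma> * C)) = 0"
  proof (rule DERIV_local_min[of g _ 0 \<delta>])
    show "(g has_real_derivative \<sigma> * (2 * A) - S * (q * ((p + 1) * \<sigma> * C))) (at 0)"
      unfolding g[abs_def] by (auto intro!: derivative_eq_intros)
    show "\<forall>t. \<bar>0 - t\<bar> < \<delta> \<longrightarrow> g 0 \<le> g t"
      using bound by (simp add: g_def minimal S_def)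
  qed (rule \<delta>)
  then have "\<sigma> * (2 * A) = S * (q * ((p + 1) * \<sigma> * C))"
    by simp
  also have "q * ((p + 1) * \<sigma> * C) = 2 * \<sigma> * C"
    using p_pos by (simp add: q_def)
  finally have "\<sigma> * (2 * A) = \<sigma> * (2 * (S * C))"
    by (simp only: mult_ac)
  moreover have "\<sigma> > 0"
    unfolding \<sigma>_def using N_pos by (rule sphere_area_pos)
  ultimately have "A = S * C"
    by simp
  then show ?thesis
    by (simp add: A_def C_def S_def)
qed

end

lemma (in positive_admissible_profile) test_perturbation_cutoff:
  "0 \<le> a \<Longrightarrow> a < 1 \<Longrightarrow> test_perturbation N p R \<alpha> u (cutoff a) (cutoff_deriv a)"
  by unfold_locales
    (use N_pos p_pos R_nonneg R_le_one alpha_pos admissible positive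
      has_real_derivative_cutoff continuous_on_cutoff_deriv cutoff_one in auto)

section \<open>Radial minimisers\<close>

locale radial_minimiser = positive_admissible_profile +
  assumes wnorm_one: "wnorm N R \<alpha> p u = 1"
    and dirichlet_eq_S_rad: "dirichlet N u = S_rad N R \<alpha> p"
begin

lemma abs_rderiv_one_le:
  "\<bar>rderiv u 1\<bar> \<le> S_rad N R \<alpha> p * (LINT r:{0<..<1}|lborel. Vw R \<alpha> r * u r powr p * r ^ (N - 1))"
proof (rule field_le_epsilon)
  fix \<delta> :: real assume "\<delta> > 0"
  define g where "g r = rderiv u r * r ^ (N - 1)" for r :: real
  have g_cutoff: "g r * cutoff_deriv a r = rderiv u r * cutoff_deriv a r * r ^ (N - 1)" for a r
    by (simp add: g_def)
  have continuous: "continuous_on {0<..1} g"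
    unfolding g_def[abs_def] by (intro continuous_intros continuous_on_rderiv)
  have integrable: "set_integrable lborel {0<..<1} (\<lambda>r. g r * cutoff_deriv a r)" if "0 \<le> a" "a < 1" for a
  proof -
    interpret cut: test_perturbation N p R \<alpha> u "cutoff a" "cutoff_deriv a"
      using that by (rule test_perturbation_cutoff)
    show ?thesis
      unfolding g_cutoff by (rule cut.set_integrable_rderiv_mult_test_deriv)
  qed
  obtain a where a: "0 \<le> a" "a < 1"
    and approx: "\<bar>(LINT r:{0<..<1}|lborel. g r * cutoff_deriv a r) + g 1\<bar> \<le> \<delta>"
    using cutoff_deriv_integral_approx[OF continuous \<open>\<delta> > 0\<close> integrable] by blast
  interpret cut: test_perturbation N p R \<alpha> u "cutoff a" "cutoff_deriv a"
    using a by (rule test_perturbation_cutoff)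
  define C where "C = (LINT r:{0<..<1}|lborel. Vw R \<alpha> r * u r powr p * cutoff a r * r ^ (N - 1))"
  define M where "M = (LINT r:{0<..<1}|lborel. Vw R \<alpha> r * u r powr p * r ^ (N - 1))"
  have "(LINT r:{0<..<1}|lborel. g r * cutoff_deriv a r) = S_rad N R \<alpha> p * C"
    unfolding g_cutoff C_def by (rule cut.weak_Euler_Lagrange[OF wnorm_one dirichlet_eq_S_rad])
  moreover have "0 \<le> C"
    unfolding C_def using Vw_nonneg cutoff_bounds(1)[OF a(2)] by (intro set_integral_nonneg) simp
  moreover have "C \<le> M"
    unfolding C_def M_def
  proof (intro set_integral_mono cut.set_integrable_Vw_powr_mult_test set_integrable_Vw_powr)
    fix r :: real assume r: "r \<in> {0<..<1}"
    then show "Vw R \<alpha> r * u r powr p * cutoff a r * r ^ (N - 1) \<le> Vw R \<alpha> r * u r powr p * r ^ (N - 1)"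
      using Vw_powr_nonneg[OF r] cutoff_bounds(2)[OF a(2), of r]
        mult_left_le[of "cutoff a r" "Vw R \<alpha> r * u r powr p * r ^ (N - 1)"]
      by (simp add: algebra_simps)
  qed
  ultimately have "0 \<le> S_rad N R \<alpha> p * C" "S_rad N R \<alpha> p * C \<le> S_rad N R \<alpha> p * M"
    using S_rad_nonneg by (simp_all add: mult_left_mono)
  then show "\<bar>rderiv u 1\<bar> \<le> S_rad N R \<alpha> p * (LINT r:{0<..<1}|lborel. Vw R \<alpha> r * u r powr p * r ^ (N - 1)) + \<delta>"
    using approx \<open>_ = S_rad N R \<alpha> p * C\<close> by (simp add: g_def M_def abs_le_iff)
qed

lemma Vw_powr_integral_le:
  "(LINT r:{0<..<1}|lborel. Vw R \<alpha> r * u r powr p * r ^ (N - 1))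
    \<le> (1 / sphere_area N) powr (p / (p + 1)) * (1 / (\<alpha> + 1)) powr (1 / (p + 1))"
proof -
  define \<sigma> where "\<sigma> = sphere_area N"
  define l where "l = (1 / (\<alpha> + 1) * \<sigma>) powr (1 / (p + 1))"
  have \<sigma>: "\<sigma> > 0"
    unfolding \<sigma>_def using N_pos by (rule sphere_area_pos)
  have "(LINT r:{0<..<1}|lborel. Vw R \<alpha> r * u r powr p * r ^ (N - 1))
      \<le> (LINT r:{0<..<1}|lborel. (p / (p + 1) * l) * (Vw R \<alpha> r * \<bar>u r\<bar> powr (p + 1) * r ^ (N - 1))
          + (l powr (- p) / (p + 1)) * (Vw R \<alpha> r * r ^ (N - 1)))"
  proof (intro set_integral_mono set_integrable_Vw_powr set_integral_add(1) set_integrable_mult_right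
      set_integrable_Vw_abs_powr set_integrable_Vw_power R_nonneg R_le_one less_imp_le[OF alpha_pos])
    fix r :: real assume r: "r \<in> {0<..<1}"
    have "u r powr p \<le> p / (p + 1) * l * u r powr (p + 1) + l powr (- p) / (p + 1)"
      using positive[OF r] p_pos \<sigma> alpha_pos by (intro powr_le_Young) (auto simp: l_def)
    then have "Vw R \<alpha> r * r ^ (N - 1) * u r powr p
        \<le> Vw R \<alpha> r * r ^ (N - 1) * (p / (p + 1) * l * u r powr (p + 1) + l powr (- p) / (p + 1))"
      using r Vw_nonneg[of R \<alpha> r] by (intro mult_left_mono) auto
    then show "Vw R \<alpha> r * u r powr p * r ^ (N - 1) \<le> p / (p + 1) * l * (Vw R \<alpha> r * \<bar>u r\<bar> powr (p + 1) * r ^ (N - 1))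
        + l powr (- p) / (p + 1) * (Vw R \<alpha> r * r ^ (N - 1))"
      using positive[OF r] by (simp add: algebra_simps)
  qed
  also have "\<dots> = p / (p + 1) * l * (LINT r:{0<..<1}|lborel. Vw R \<alpha> r * \<bar>u r\<bar> powr (p + 1) * r ^ (N - 1))
      + l powr (- p) / (p + 1) * (LINT r:{0<..<1}|lborel. Vw R \<alpha> r * r ^ (N - 1))"
    using set_integrable_Vw_abs_powr set_integrable_Vw_power[OF R_nonneg R_le_one less_imp_le[OF alpha_pos]]
    by simp
  also have "\<dots> = p / (p + 1) * l * (1 / \<sigma>) + l powr (- p) / (p + 1) * (LINT r:{0<..<1}|lborel. Vw R \<alpha> r * r ^ (N - 1))"
  proof -
    have "(LINT r:{0<..<1}|lborel. Vw R \<alpha> r * \<bar>u r\<bar> powr (p + 1) * r ^ (N - 1)) = 1 / \<sigma>"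
      using wnorm_one \<sigma> by (simp add: wnorm_def \<sigma>_def field_simps)
    then show ?thesis
      by (simp only:)
  qed
  also have "\<dots> \<le> p / (p + 1) * l * (1 / \<sigma>) + l powr (- p) / (p + 1) * (1 / (\<alpha> + 1))"
    using set_integral_Vw_power_le[OF R_nonneg R_le_one alpha_pos] p_pos
    by (intro add_left_mono mult_left_mono) auto
  also have "\<dots> = (1 / \<sigma>) powr (p / (p + 1)) * (1 / (\<alpha> + 1)) powr (1 / (p + 1))"
    unfolding l_def using \<sigma> alpha_pos p_pos by (intro Young_balanced) auto
  finally show ?thesis
    by (simp add: \<sigma>_def)
qed

lemma energy_scaled_minimiser:
  assumes "p > 1"
  shows "energy N R \<alpha> p (\<lambda>r. S_rad N R \<alpha> p powr (1 / (p - 1)) * u r)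
    = S_rad N R \<alpha> p powr ((p + 1) / (p - 1)) * ((p - 1) / (2 * (p + 1)))"
proof -
  define S where "S = S_rad N R \<alpha> p"
  define c where "c = S powr (1 / (p - 1))"
  have "energy N R \<alpha> p (\<lambda>r. c * u r) = c\<^sup>2 * S / 2 - c powr (p + 1) / (p + 1)"
    unfolding energy_def using dirichlet_eq_S_rad wnorm_one
    by (simp add: dirichlet_scale[OF admissible] wnorm_scale[OF admissible] c_def S_def)
  moreover have "c\<^sup>2 * S = S powr ((p + 1) / (p - 1))" "c powr (p + 1) = S powr ((p + 1) / (p - 1))"
  proof -
    have "2 / (p - 1) + 1 = (p + 1) / (p - 1)" "1 / (p - 1) * (p + 1) = (p + 1) / (p - 1)"
      using assms by (simp_all add: field_simps)
    moreover have "c\<^sup>2 = S powr (2 / (p - 1))"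
      by (simp add: c_def power2_eq_square powr_add[symmetric] add_divide_distrib[symmetric])
    moreover have "S powr (2 / (p - 1)) * S = S powr (2 / (p - 1) + 1)"
      using S_rad_nonneg by (cases "S = 0") (simp_all add: S_def powr_add)
    ultimately show "c\<^sup>2 * S = S powr ((p + 1) / (p - 1))" "c powr (p + 1) = S powr ((p + 1) / (p - 1))"
      by (simp_all add: c_def powr_powr)
  qed
  ultimately show ?thesis
    using assms by (simp add: c_def S_def field_simps)
qed

lemma scaled_boundary_flux_le:
  assumes "p > 1"
  defines "v \<equiv> \<lambda>r. S_rad N R \<alpha> p powr (1 / (p - 1)) * u r"
  shows "sphere_area N * (rderiv v 1)\<^sup>2
    \<le> Kstar N p * energy N R \<alpha> p v powr (2 * p / (p + 1)) / (\<alpha> + 1) powr (2 / (p + 1))"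
proof -
  define S where "S = S_rad N R \<alpha> p"
  define T where "T = (1 / sphere_area N) powr (p / (p + 1)) * (1 / (\<alpha> + 1)) powr (1 / (p + 1))"
  have S: "S \<ge> 0"
    using S_rad_nonneg by (simp add: S_def)
  have "\<bar>rderiv u 1\<bar> \<le> S * T"
    using abs_rderiv_one_le mult_left_mono[OF Vw_powr_integral_le S] by (simp add: S_def T_def)
  then have "(rderiv u 1)\<^sup>2 \<le> (S * T)\<^sup>2"
    by (simp add: abs_le_square_iff[symmetric] T_def S)
  then have "sphere_area N * (rderiv v 1)\<^sup>2 \<le> sphere_area N * (S powr (1 / (p - 1)) * (S * T))\<^sup>2"
    using sphere_area_pos[OF N_pos]
    by (simp add: v_def S_def rderiv_scale[OF admissible] power_mult_distrib mult_left_mono)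
  also have "\<dots> = Kstar N p * energy N R \<alpha> p v powr (2 * p / (p + 1)) / (\<alpha> + 1) powr (2 / (p + 1))"
  proof (cases "S = 0")
    case True
    then show ?thesis
      using energy_scaled_minimiser[OF assms(1)] by (simp add: v_def S_def)
  next
    case False
    then show ?thesis
      using Kstar_energy_identity[of N S p \<alpha>] S sphere_area_pos[OF N_pos] assms(1) alpha_pos
      by (simp add: v_def S_def T_def energy_scaled_minimiser)
  qed
  finally show ?thesis .
qed

end

theorem mainTheorem9:
  fixes N :: nat and p R \<alpha> :: real and ustar :: "real \<Rightarrow> real"
  assumes "N \<ge> 2"
    and "p > 1"
    and "N \<ge> 3 \<longrightarrow> p < (real N + 2) / (real N - 2)"
    and "0 \<le> R" and "R \<le> 1"
    and "\<alpha> > 0"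
    and "rad_adm N R \<alpha> p ustar"
    and "\<forall>r\<in>{0<..<1}. ustar r > 0"
    and "wnorm N R \<alpha> p ustar = 1"
    and "dirichlet N ustar = S_rad N R \<alpha> p"
  shows "let u = (\<lambda>r. S_rad N R \<alpha> p powr (1 / (p - 1)) * ustar r);
             C = energy N R \<alpha> p u
         in sphere_area N * (rderiv u 1)\<^sup>2
            \<le> Kstar N p * C powr (2 * p / (p + 1)) / (\<alpha> + 1) powr (2 / (p + 1))"
proof -
  \<comment> \<open>Subcriticality of \<open>p\<close> is needed only for the existence of the minimiser, which is assumed.\<close>
  interpret radial_minimiser N p R \<alpha> ustar
    using assms by unfold_locales auto
  show ?thesis
    unfolding Let_def using assms(2) by (rule scaled_boundary_flux_le)
qed

end
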